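(* Let $q\in\mathbb{C}\setminus\{0\}$, $\hat E_q(x)=\sum_{m\ge0}(-1)^mq^{m(m-1)/2}x^m$, and for $k\ge1$ let $P_k=\sum_{j=0}^{k-1}q^{j(j-1)/2}(-x)^j$. For every integer $n\ge2$, $$(x\sigma_q+1)\frac{1}{P_{n-1}}(x^2\sigma_q-1)\frac{1}{P_{n-2}}(x^3\sigma_q+1)\cdots\frac{1}{P_1}\left(x^n\sigma_q-(-1)^n\right)\hat E_q(x)^n=(-1)^{n(n-1)/2}P_n,$$ where the operator on the left is the composition, from left to right, of $\left(x\sigma_q+1\right)$ followed, for $i=2,\dots,n$, by $\frac{1}{P_{n+1-i}}\left(x^{i}\sigma_q-(-1)^{i}\right)$ (note $P_1=1$).
   Context: $\sigma_qf(x)=f(qx)$ acting on the field $\mathbb{C}[x^{-1}][[x]]$ of formal Laurent series; field elements act as multiplication operators and products of operators denote composition. *)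

theory Defs
  imports "HOL-Computational_Algebra.Formal_Laurent_Series"
begin

(* q-dilation operator sigma_q f(x) = f(qx) on formal Laurent series:
   the coefficient of x^k is multiplied by q^k (k an integer). *)
lift_definition qdil :: "complex \<Rightarrow> complex fls \<Rightarrow> complex fls"
  is "\<lambda>q f k. q powi k * f k"
  by (auto elim!: eventually_mono)

definition Ehat :: "complex \<Rightarrow> complex fls" where
  "Ehat q = fps_to_fls (Abs_fps (\<lambda>m. (-1) ^ m * q ^ (m * (m - 1) div 2)))"

definition Pq :: "complex \<Rightarrow> nat \<Rightarrow> complex fls" where
  "Pq q k = (\<Sum>j<k. fls_const (q ^ (j * (j - 1) div 2)) * (- fls_X) ^ j)"

definition opB :: "complex \<Rightarrow> nat \<Rightarrow> nat \<Rightarrow> complex fls \<Rightarrow> complex fls" where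
  "opB q n i f = (fls_X ^ i * qdil q f - (-1) ^ i * f) / Pq q (n + 1 - i)"

definition opA :: "complex \<Rightarrow> complex fls \<Rightarrow> complex fls" where
  "opA q f = fls_X * qdil q f + f"

definition bigOp :: "complex \<Rightarrow> nat \<Rightarrow> complex fls \<Rightarrow> complex fls" where
  "bigOp q n f = opA q (foldr (opB q n) [2..<n+1] f)"

end

theory Submission
  imports Defs
begin

unbundle fps_syntax

(*
  Put F(t) = (t - E)^n, E = Ehat q, and let D(i,k) be the divided difference of F at the nodes
  P_i, ..., P_(i+k), where P_0 = 0. Since x sigma_q E = 1 - E and x sigma_q P_l = 1 - P_(l+1),
  sigma_q maps every difference of two of the series P_l, E to -1/x times the same difference
  with all node indices shifted by one, hence sigma_q D(i,k) = (-1/x)^(n-k) D(i+1,k). Therefore the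
  factor (1/P_(k+1)) (x^(n-k) sigma_q - (-1)^(n-k)) sends D(0,k) to
  +-(D(1,k) - D(0,k)) / P_(k+1) = +-D(0,k+1). Starting from E^n = +-D(0,0), the operator produces
  +-(D(1,n-1) - D(0,n-1)) = +-P_n D(0,n), and D(0,n) = 1 because F is monic of degree n.
*)

lemma qdil_nth [simp]: "qdil q f $$ k = q powi k * f $$ k"
  by (simp add: qdil.rep_eq)

lemma qdil_diff [simp]: "qdil q (f - g) = qdil q f - qdil q g"
  by (simp add: fls_eq_iff algebra_simps)

lemma qdil_zero [simp]: "qdil q 0 = 0"
  by (simp add: fls_eq_iff)

lemma qdil_one [simp]: "qdil q 1 = 1"
  by (simp add: fls_eq_iff)

lemma qdil_neg_one_power_times [simp]: "qdil q ((-1) ^ m * f) = (-1) ^ m * qdil q f"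
  by (cases "even m") (simp_all add: fls_eq_iff)

lemma fls_subdegree_qdil:
  assumes "q \<noteq> 0"
  shows "fls_subdegree (qdil q f) = fls_subdegree f"
  using assms by (cases "f = 0") (auto intro!: fls_subdegree_eqI simp: nth_fls_subdegree_nonzero)

lemma qdil_mult:
  assumes q: "q \<noteq> 0"
  shows "qdil q (f * g) = qdil q f * qdil q g"
proof (rule fls_eqI)
  fix n
  let ?I = "{fls_subdegree f..n - fls_subdegree g}"
  have "(qdil q f * qdil q g) $$ n = (\<Sum>i\<in>?I. q powi i * f $$ i * (q powi (n - i) * g $$ (n - i)))"
    by (simp add: fls_times_nth(2) fls_subdegree_qdil[OF q] mult.assoc)
  also have "\<dots> = (\<Sum>i\<in>?I. q powi n * (f $$ i * g $$ (n - i)))"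
    by (rule sum.cong) (auto simp: q power_int_diff field_simps)
  finally show "qdil q (f * g) $$ n = (qdil q f * qdil q g) $$ n"
    by (simp add: fls_times_nth(2) sum_distrib_left)
qed

lemma qdil_inverse:
  assumes q: "q \<noteq> 0"
  shows "qdil q (inverse f) = inverse (qdil q f)"
proof (cases "f = 0")
  case False
  then have "qdil q f * qdil q (inverse f) = 1"
    by (simp add: qdil_mult[OF q, symmetric])
  then show ?thesis by (metis inverse_unique)
qed simp

lemma qdil_divide:
  assumes "q \<noteq> 0"
  shows "qdil q (f / g) = qdil q f / qdil q g"
  by (simp add: divide_inverse qdil_mult qdil_inverse assms)

lemma qdil_power:
  assumes "q \<noteq> 0"
  shows "qdil q (f ^ m) = qdil q f ^ m"
  by (induction m) (simp_all add: qdil_mult assms)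

lemma fls_nth_X_times_qdil: "(fls_X * qdil q f) $$ n = q powi (n - 1) * f $$ (n - 1)"
  by (simp only: fls_X_times_conv_shift(1) fls_shift_nth qdil_nth) simp

definition qexp_coeff :: "complex \<Rightarrow> nat \<Rightarrow> complex" where
  "qexp_coeff q m = (-1) ^ m * q ^ (m * (m - 1) div 2)"

lemma qexp_coeff_0 [simp]: "qexp_coeff q 0 = 1"
  by (simp add: qexp_coeff_def)

lemma qexp_coeff_Suc: "qexp_coeff q (Suc m) = - (q ^ m * qexp_coeff q m)"
proof -
  have "Suc m * m div 2 = m + m * (m - 1) div 2"
    by (cases m) (simp_all add: algebra_simps)
  then show ?thesis by (simp add: qexp_coeff_def power_add)
qed

lemma qexp_coeff_nonzero: "q \<noteq> 0 \<Longrightarrow> qexp_coeff q m \<noteq> 0"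
  by (simp add: qexp_coeff_def)

lemma fls_nth_Ehat: "Ehat q $$ n = (if n < 0 then 0 else qexp_coeff q (nat n))"
  by (simp add: Ehat_def qexp_coeff_def)

lemma fls_nth_Pq: "Pq q k $$ n = (if n < 0 \<or> int k \<le> n then 0 else qexp_coeff q (nat n))"
proof -
  have term_nth: "(fls_const (q ^ (j * (j - 1) div 2)) * (- fls_X) ^ j) $$ n =
      (if int j = n then qexp_coeff q j else 0)" for j
    by (cases "even j") (auto simp: qexp_coeff_def)
  have "Pq q k $$ n = (\<Sum>j<k. if int j = n then qexp_coeff q j else 0)"
    unfolding Pq_def fls_nth_sum term_nth ..
  also have "\<dots> = (if n < 0 \<or> int k \<le> n then 0 else qexp_coeff q (nat n))"
  proof (cases "n < 0")
    case False
    then obtain m where "n = int m"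
      by (metis nonneg_int_cases not_less)
    then show ?thesis by simp
  qed simp
  finally show ?thesis .
qed

lemma X_times_qdil_Ehat: "fls_X * qdil q (Ehat q) = 1 - Ehat q"
proof (rule fls_eqI)
  fix n :: int
  show "(fls_X * qdil q (Ehat q)) $$ n = (1 - Ehat q) $$ n"
  proof (cases "n \<le> 0")
    case False
    then obtain m where "n = int (Suc m)"
      by (intro that[of "nat (n - 1)"]) simp
    then show ?thesis by (simp add: fls_nth_X_times_qdil fls_nth_Ehat nat_add_distrib qexp_coeff_Suc)
  qed (cases "n = 0"; simp add: fls_nth_X_times_qdil fls_nth_Ehat)
qed

lemma X_times_qdil_Pq: "fls_X * qdil q (Pq q k) = 1 - Pq q (Suc k)"
proof (rule fls_eqI)
  fix n :: int
  show "(fls_X * qdil q (Pq q k)) $$ n = (1 - Pq q (Suc k)) $$ n"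
  proof (cases "n \<le> 0")
    case False
    then obtain m where "n = int (Suc m)"
      by (intro that[of "nat (n - 1)"]) simp
    then show ?thesis by (simp add: fls_nth_X_times_qdil fls_nth_Pq nat_add_distrib qexp_coeff_Suc)
  qed (cases "n = 0"; simp add: fls_nth_X_times_qdil fls_nth_Pq)
qed

lemma Pq_0 [simp]: "Pq q 0 = 0"
  by (simp add: Pq_def)

lemma inj_Pq:
  assumes "q \<noteq> 0"
  shows "inj (Pq q)"
proof -
  have "Pq q a \<noteq> Pq q b" if "a < b" for a b
  proof -
    have "Pq q a $$ int a \<noteq> Pq q b $$ int a"
      using that by (simp add: fls_nth_Pq qexp_coeff_nonzero assms)
    then show ?thesis by auto
  qed
  then show ?thesis
    by (intro injI) (metis linorder_neqE_nat)
qed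

fun divided_diff :: "('a::field \<Rightarrow> 'a) \<Rightarrow> (nat \<Rightarrow> 'a) \<Rightarrow> nat \<Rightarrow> nat \<Rightarrow> 'a" where
  "divided_diff f p i 0 = f (p i)"
| "divided_diff f p i (Suc k) =
     (divided_diff f p (Suc i) k - divided_diff f p i k) / (p (i + Suc k) - p i)"

lemma divided_diff_shift:
  assumes map_diff: "\<And>x y. \<phi> (x - y) = \<phi> x - \<phi> y"
    and map_divide: "\<And>x y. \<phi> (x / y) = \<phi> x / \<phi> y"
    and map_values: "\<And>l. \<phi> (f (p l)) = c * f (p (Suc l))"
    and map_nodes: "\<And>a b. \<phi> (p a - p b) = d * (p (Suc a) - p (Suc b))"
    and "d \<noteq> 0"
  shows "\<phi> (divided_diff f p i k) = c / d ^ k * divided_diff f p (Suc i) k"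
proof (induction k arbitrary: i)
  case (Suc k)
  have "\<phi> (divided_diff f p i (Suc k)) =
      \<phi> (divided_diff f p (Suc i) k - divided_diff f p i k) / (d * (p (Suc (i + Suc k)) - p (Suc i)))"
    by (simp only: divided_diff.simps map_divide map_nodes)
  also have "\<dots> =
      (c / d ^ k * divided_diff f p (Suc (Suc i)) k - c / d ^ k * divided_diff f p (Suc i) k) /
      (d * (p (Suc (i + Suc k)) - p (Suc i)))"
    by (simp only: map_diff Suc.IH)
  also have "\<dots> = c / d ^ Suc k * divided_diff f p (Suc i) (Suc k)"
    using \<open>d \<noteq> 0\<close> by (simp add: field_simps)
  finally show ?case .
qed (simp add: map_values)

lemma divided_diff_linear_times:
  assumes "inj p"
  shows "divided_diff (\<lambda>t. (t - c) * g t) p i (Suc k) =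
    (p i - c) * divided_diff g p i (Suc k) + divided_diff g p (Suc i) k"
proof (induction k arbitrary: i)
  case 0
  have "p (Suc i) - p i \<noteq> 0"
    using injD[OF assms, of "Suc i" i] by auto
  then show ?case by (simp add: field_simps)
next
  case (Suc k)
  define G where "G = divided_diff g p"
  define D where "D = p (i + Suc (Suc k)) - p i"
  define D' where "D' = p (Suc i + Suc k) - p (Suc i)"
  have "D \<noteq> 0" "D' \<noteq> 0"
    using injD[OF assms, of "i + Suc (Suc k)" i] injD[OF assms, of "Suc i + Suc k" "Suc i"]
    by (auto simp: D_def D'_def)
  have G': "G (Suc (Suc i)) k = G (Suc i) k + D' * G (Suc i) (Suc k)"
    using \<open>D' \<noteq> 0\<close> by (simp add: G_def D'_def)
  have "divided_diff (\<lambda>t. (t - c) * g t) p i (Suc (Suc k)) =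
      ((p (Suc i) - c) * G (Suc i) (Suc k) + G (Suc (Suc i)) k
        - ((p i - c) * G i (Suc k) + G (Suc i) k)) / D"
    by (simp only: divided_diff.simps(2)[of _ _ i "Suc k"] Suc.IH D_def G_def)
  also have "\<dots> = (p i - c) * ((G (Suc i) (Suc k) - G i (Suc k)) / D) + G (Suc i) (Suc k)"
    unfolding G' using \<open>D \<noteq> 0\<close> by (simp add: field_simps D_def D'_def)
  finally show ?case by (simp add: G_def D_def)
qed

lemma divided_diff_linear_power:
  assumes "inj p" and "m \<le> k"
  shows "divided_diff (\<lambda>t. (t - c) ^ m) p i k = (if m = k then 1 else 0)"
  using assms(2)
proof (induction m arbitrary: i k)
  case 0
  show ?case by (induction k arbitrary: i) auto
next
  case (Suc m)
  then obtain k' where k: "k = Suc k'" by (cases k) auto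
  have "divided_diff (\<lambda>t. (t - c) ^ Suc m) p i k =
      (p i - c) * divided_diff (\<lambda>t. (t - c) ^ m) p i (Suc k') + divided_diff (\<lambda>t. (t - c) ^ m) p (Suc i) k'"
    unfolding k power_Suc by (rule divided_diff_linear_times[OF assms(1)])
  then show ?case
    using Suc by (simp add: k)
qed

definition Ehat_dd :: "complex \<Rightarrow> nat \<Rightarrow> nat \<Rightarrow> nat \<Rightarrow> complex fls" where
  "Ehat_dd q n = divided_diff (\<lambda>t. (t - Ehat q) ^ n) (Pq q)"

lemma X_power_times_qdil_Ehat_dd:
  assumes q: "q \<noteq> 0" and "k \<le> n"
  shows "fls_X ^ (n - k) * qdil q (Ehat_dd q n i k) = (-1) ^ (n - k) * Ehat_dd q n (Suc i) k"
proof -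
  define d :: "complex fls" where "d = - inverse fls_X"
  have "d \<noteq> 0"
    by (simp add: d_def)
  have qdil_Ehat: "qdil q (Ehat q) = (1 - Ehat q) / fls_X"
    by (metis X_times_qdil_Ehat fls_X_nonzero nonzero_mult_div_cancel_left)
  have qdil_Pq: "qdil q (Pq q l) = (1 - Pq q (Suc l)) / fls_X" for l
    by (metis X_times_qdil_Pq fls_X_nonzero nonzero_mult_div_cancel_left)
  have "qdil q (Ehat_dd q n i k) = d ^ n / d ^ k * Ehat_dd q n (Suc i) k"
    unfolding Ehat_dd_def
  proof (rule divided_diff_shift)
    show "qdil q ((Pq q l - Ehat q) ^ n) = d ^ n * (Pq q (Suc l) - Ehat q) ^ n" for l
      by (simp add: qdil_power[OF q] qdil_Pq qdil_Ehat d_def power_mult_distrib[symmetric]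
          divide_inverse algebra_simps)
    show "qdil q (Pq q a - Pq q b) = d * (Pq q (Suc a) - Pq q (Suc b))" for a b
      by (simp add: qdil_Pq d_def divide_inverse algebra_simps)
  qed (simp_all add: qdil_divide[OF q] \<open>d \<noteq> 0\<close>)
  also have "d ^ n / d ^ k = d ^ (n - k)"
    using \<open>d \<noteq> 0\<close> \<open>k \<le> n\<close> by (simp add: power_diff)
  finally have "fls_X ^ (n - k) * qdil q (Ehat_dd q n i k) = (fls_X * d) ^ (n - k) * Ehat_dd q n (Suc i) k"
    by (simp add: power_mult_distrib)
  then show ?thesis
    by (simp add: d_def)
qed

lemma opB_neg_one_power_times: "opB q n i ((-1) ^ s * f) = (-1) ^ s * opB q n i f"
  by (simp add: opB_def) (simp add: algebra_simps)

lemma opA_neg_one_power_times: "opA q ((-1) ^ s * f) = (-1) ^ s * opA q f"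
  by (simp add: opA_def) (simp add: algebra_simps)

lemma opB_Ehat_dd:
  assumes q: "q \<noteq> 0" and "k \<le> n"
  shows "opB q n (n - k) (Ehat_dd q n 0 k) = (-1) ^ (n - k) * Ehat_dd q n 0 (Suc k)"
proof -
  have "n + 1 - (n - k) = Suc k"
    using \<open>k \<le> n\<close> by simp
  then have "opB q n (n - k) (Ehat_dd q n 0 k) =
      (fls_X ^ (n - k) * qdil q (Ehat_dd q n 0 k) - (-1) ^ (n - k) * Ehat_dd q n 0 k) / Pq q (Suc k)"
    by (simp only: opB_def)
  also have "\<dots> =
      ((-1) ^ (n - k) * Ehat_dd q n (Suc 0) k - (-1) ^ (n - k) * Ehat_dd q n 0 k) / Pq q (Suc k)"
    by (simp only: X_power_times_qdil_Ehat_dd[OF assms])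
  also have "\<dots> = (-1) ^ (n - k) * ((Ehat_dd q n (Suc 0) k - Ehat_dd q n 0 k) / (Pq q (0 + Suc k) - Pq q 0))"
    by (simp only: Pq_0 add_0 diff_zero right_diff_distrib times_divide_eq_right)
  finally show ?thesis
    by (simp only: Ehat_dd_def divided_diff.simps)
qed

lemma foldr_opB_Ehat_power:
  assumes q: "q \<noteq> 0" and "k \<le> n"
  shows "foldr (opB q n) [n + 1 - k..<n + 1] (Ehat q ^ n) =
    (-1) ^ (n + (\<Sum>j<k. n - j)) * Ehat_dd q n 0 k"
  using \<open>k \<le> n\<close>
proof (induction k)
  case 0
  have "Ehat_dd q n 0 0 = (-1) ^ n * Ehat q ^ n"
    by (simp add: Ehat_dd_def flip: power_mult_distrib)
  then show ?case by simp
next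
  case (Suc k)
  then have "k \<le> n" by simp
  have "[n + 1 - Suc k..<n + 1] = (n - k) # [n + 1 - k..<n + 1]"
  proof -
    have "n + 1 - Suc k = n - k" "Suc (n - k) = n + 1 - k" "n - k < n + 1"
      using Suc.prems by auto
    then show ?thesis
      by (metis upt_conv_Cons)
  qed
  then have "foldr (opB q n) [n + 1 - Suc k..<n + 1] (Ehat q ^ n) =
      opB q n (n - k) ((-1) ^ (n + (\<Sum>j<k. n - j)) * Ehat_dd q n 0 k)"
    using Suc.IH \<open>k \<le> n\<close> by simp
  also have "\<dots> = (-1) ^ (n + (\<Sum>j<k. n - j)) * ((-1) ^ (n - k) * Ehat_dd q n 0 (Suc k))"
    by (simp only: opB_neg_one_power_times opB_Ehat_dd[OF q \<open>k \<le> n\<close>])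
  finally show ?case
    by (simp add: power_add)
qed

lemma opA_Ehat_dd:
  assumes q: "q \<noteq> 0" and "n \<ge> 1"
  shows "opA q (Ehat_dd q n 0 (n - 1)) = - Pq q n"
proof -
  let ?D0 = "Ehat_dd q n 0 (n - 1)" and ?D1 = "Ehat_dd q n (Suc 0) (n - 1)"
  have n: "Suc (n - 1) = n" "n - (n - 1) = 1"
    using \<open>n \<ge> 1\<close> by simp_all
  have "fls_X * qdil q ?D0 = - ?D1"
    using X_power_times_qdil_Ehat_dd[OF q, of "n - 1" n 0] n by simp
  moreover have "Pq q n \<noteq> 0"
    using injD[OF inj_Pq[OF q], of n 0] \<open>n \<ge> 1\<close> by auto
  moreover have "(?D1 - ?D0) / Pq q n = Ehat_dd q n 0 n"
    using divided_diff.simps(2)[of "\<lambda>t. (t - Ehat q) ^ n" "Pq q" 0 "n - 1"]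
    by (simp only: Ehat_dd_def n add_0 Pq_0 diff_zero)
  moreover have "Ehat_dd q n 0 n = 1"
    by (simp add: Ehat_dd_def divided_diff_linear_power inj_Pq[OF q])
  ultimately show ?thesis
    by (simp add: opA_def field_simps)
qed

lemma sum_lessThan_diff_double: "k \<le> (n::nat) \<Longrightarrow> (\<Sum>j<k. n - j) * 2 + k * k = k * (2 * n + 1)"
  by (induction k) (simp_all add: algebra_simps)

lemma sign_exponent:
  fixes n :: nat
  assumes "n \<ge> 1"
  shows "n + (\<Sum>j<n - 1. n - j) + 1 = n * (n - 1) div 2 + 2 * n"
proof -
  obtain m where n: "n = Suc m"
    using assms by (cases n) auto
  have "(\<Sum>j<m. n - j) * 2 + m * m = m * (2 * n + 1)"
    using sum_lessThan_diff_double[of m n] n by simp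
  then show ?thesis
    unfolding n by (simp add: algebra_simps)
qed

theorem mainTheorem9:
  fixes q :: complex and n :: nat
  assumes "q \<noteq> 0" and "n \<ge> 2"
  shows "bigOp q n (Ehat q ^ n) = (-1) ^ (n * (n - 1) div 2) * Pq q n"
proof -
  let ?s = "n + (\<Sum>j<n - 1. n - j)"
  have "n + 1 - (n - 1) = 2"
    using \<open>n \<ge> 2\<close> by simp
  then have "bigOp q n (Ehat q ^ n) = opA q ((-1) ^ ?s * Ehat_dd q n 0 (n - 1))"
    using foldr_opB_Ehat_power[OF \<open>q \<noteq> 0\<close>, of "n - 1" n] by (simp add: bigOp_def)
  also have "\<dots> = (-1) ^ ?s * opA q (Ehat_dd q n 0 (n - 1))"
    by (rule opA_neg_one_power_times)
  also have "\<dots> = (-1) ^ (?s + 1) * Pq q n"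
    using \<open>n \<ge> 2\<close> by (simp only: opA_Ehat_dd[OF \<open>q \<noteq> 0\<close>]) simp_all
  also have "?s + 1 = n * (n - 1) div 2 + 2 * n"
    using sign_exponent \<open>n \<ge> 2\<close> by simp
  finally show ?thesis
    by (simp add: power_add)
qed

end
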